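(* Let $U^{(n)}$ be uniformly distributed on $\{1,\dots,n\}$ and, for $1\le m<n$, put $\widetilde U^{(n,m)}:=\prod_{m<p\le n,\ p\ \text{prime}}p^{\mathbbm{1}_{\{\lambda_p(U^{(n)})\ge1\}}}$. Assume that $m_n\to\infty$ and $m_n=o(n)$ as $n\to\infty$. Then $$\mathbb{E}\bigl(\log\widetilde U^{(n,m_n)}-\mathbb{E}\log\widetilde U^{(n,m_n)}\bigr)^4=O(\log^4 m_n),\qquad n\to\infty.$$
   Context: For a prime $p$ and $k\in\mathbb{N}$, $\lambda_p(k)$ is the exponent of $p$ in the prime factorization of $k$. *)

theory Defs
  imports "HOL-Probability.Probability" "HOL-Library.Landau_Symbols"
    "HOL-Computational_Algebra.Primes"
begin

definition lambda_exp :: "nat \<Rightarrow> nat \<Rightarrow> nat" where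
  "lambda_exp p k = multiplicity p k"

definition Utilde :: "nat \<Rightarrow> nat \<Rightarrow> nat \<Rightarrow> nat" where
  "Utilde n m k =
     (\<Prod>p\<in>{p. prime p \<and> m < p \<and> p \<le> n}. p ^ (if lambda_exp p k \<ge> 1 then 1 else 0))"

definition U_law :: "nat \<Rightarrow> nat pmf" where
  "U_law n = pmf_of_set {1..n}"

end

theory Submission
  imports Defs
begin

(* Put W = ln n - ln Utilde(U) >= 0 and L = ln m. Since W^4 <= 256 L^4 exp (W / L) and
   E W <= L E exp (W / L), the centred fourth moment is O(L^4) once E exp (W / L) = O(1).
   Write W = (ln n - ln U) + (ln U - ln Utilde(U)) and use exp (a + b) <= (exp (2a) + exp (2b)) / 2.
   The first part gives E (n / U)^(2/L) <= E sqrt (n / U) <= 2. The second is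
   sum_p max (lambda_p(U) - [p > m], 0) ln p, whose exponential is multiplicative in U; expanding it
   over prime powers (Rankin's trick) bounds its mean by prod_p (1 + 4 (p^(2/L) - 1) / p^(1 + [p > m])),
   which is exp (O(1)) because sum_(p <= m) ln p / p <= 2 L and sum_p p^(-3/2) < oo. *)

section \<open>Partial sums of multiplicative functions\<close>

lemma sum_of_bool_dvd_atLeastAtMost:
  assumes "0 < d"
  shows "(\<Sum>k=1..n. of_bool (d dvd k) :: real) = real (n div d)"
proof -
  have "{1..n} \<inter> {k. d dvd k} = (\<lambda>i. d * i) ` {1..n div d}"
    using assms by (auto simp: less_eq_div_iff_mult_less_eq mult.commute)
  moreover have "inj_on (\<lambda>i. d * i) {1..n div d}"
    using assms by (auto simp: inj_on_def)
  ultimately show ?thesis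
    by (simp add: card_image)
qed

lemma prod_prime_powers_dvd_iff:
  fixes k :: nat
  assumes "finite P" "\<And>p. p \<in> P \<Longrightarrow> prime p"
  shows "(\<Prod>p\<in>P. p ^ e p) dvd k \<longleftrightarrow> (\<forall>p\<in>P. p ^ e p dvd k)"
  using assms
proof (induction P rule: finite_induct)
  case (insert q P)
  have "coprime (q ^ e q) (\<Prod>p\<in>P. p ^ e p)"
  proof (rule prod_coprime_right)
    fix p assume "p \<in> P"
    with insert have "prime p" "prime q" "p \<noteq> q" by auto
    then show "coprime (q ^ e q) (p ^ e p)" by (simp add: primes_coprime)
  qed
  then have "(\<Prod>p\<in>insert q P. p ^ e p) dvd k \<longleftrightarrow> q ^ e q dvd k \<and> (\<Prod>p\<in>P. p ^ e p) dvd k"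
    using insert(1,2) by (auto simp: divides_mult dest: dvd_mult_left dvd_mult_right)
  with insert show ?case
    by auto
qed simp

lemma prod_of_bool:
  assumes "finite A"
  shows "(\<Prod>x\<in>A. of_bool (Q x) :: 'a :: comm_semiring_1) = of_bool (\<forall>x\<in>A. Q x)"
  using assms by (induction A rule: finite_induct) auto

lemma sum_prod_prime_power_indicators_le:
  fixes c :: "nat \<Rightarrow> 'j \<Rightarrow> real" and a :: "nat \<Rightarrow> 'j \<Rightarrow> nat"
  assumes P: "finite P" "\<And>p. p \<in> P \<Longrightarrow> prime p" and J: "finite J"
    and c: "\<And>p j. p \<in> P \<Longrightarrow> j \<in> J \<Longrightarrow> 0 \<le> c p j"
  shows "(\<Sum>k=1..n. \<Prod>p\<in>P. \<Sum>j\<in>J. c p j * of_bool (p ^ a p j dvd k))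
           \<le> real n * (\<Prod>p\<in>P. \<Sum>j\<in>J. c p j / real (p ^ a p j))"
proof -
  define d where "d g = (\<Prod>p\<in>P. p ^ a p (g p))" for g
  define w where "w g = (\<Prod>p\<in>P. c p (g p))" for g
  have d_pos: "0 < d g" for g
    using P by (auto simp: d_def prime_gt_0_nat intro!: prod_pos)
  have w_nonneg: "0 \<le> w g" if "g \<in> Pi\<^sub>E P (\<lambda>_. J)" for g
    using that c by (auto simp: w_def intro!: prod_nonneg)
  have "(\<Sum>k=1..n. \<Prod>p\<in>P. \<Sum>j\<in>J. c p j * of_bool (p ^ a p j dvd k))
      = (\<Sum>k=1..n. \<Sum>g\<in>Pi\<^sub>E P (\<lambda>_. J). \<Prod>p\<in>P. c p (g p) * of_bool (p ^ a p (g p) dvd k))"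
    using P J by (intro sum.cong refl prod_sum_PiE)
  also have "\<dots> = (\<Sum>k=1..n. \<Sum>g\<in>Pi\<^sub>E P (\<lambda>_. J). w g * of_bool (d g dvd k))"
    using P by (simp add: prod.distrib prod_of_bool prod_prime_powers_dvd_iff w_def d_def)
  also have "\<dots> = (\<Sum>g\<in>Pi\<^sub>E P (\<lambda>_. J). w g * real (n div d g))"
    by (subst sum.swap) (simp only: sum_distrib_left[symmetric] sum_of_bool_dvd_atLeastAtMost[OF d_pos])
  also have "\<dots> \<le> (\<Sum>g\<in>Pi\<^sub>E P (\<lambda>_. J). w g * (real n / real (d g)))"
    by (intro sum_mono mult_left_mono w_nonneg of_nat_div_le_of_nat)
  also have "\<dots> = real n * (\<Prod>p\<in>P. \<Sum>j\<in>J. c p j / real (p ^ a p j))"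
    using P J by (simp add: prod_sum_PiE sum_distrib_left w_def d_def prod_dividef mult.commute)
  finally show ?thesis .
qed

lemma multiplicity_le_self:
  assumes "prime (p::nat)"
  shows "multiplicity p k \<le> k"
proof (cases "k = 0")
  case False
  have "multiplicity p k < 2 ^ multiplicity p k" by (rule less_exp)
  also have "\<dots> \<le> p ^ multiplicity p k"
    using prime_ge_2_nat[OF assms] by (rule power_mono) simp
  also have "\<dots> \<le> k"
    using False by (intro dvd_imp_le multiplicity_dvd) simp
  finally show ?thesis by simp
qed simp

definition pow_increment :: "real \<Rightarrow> nat \<Rightarrow> real" where
  "pow_increment x j = (if j = 0 then 1 else (x - 1) * x ^ (j - 1))"

lemma sum_pow_increment: "(\<Sum>j\<le>e. pow_increment x j) = x ^ e"
  by (induction e) (auto simp: pow_increment_def algebra_simps)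

lemma pow_increment_nonneg: "1 \<le> x \<Longrightarrow> 0 \<le> pow_increment x j"
  by (simp add: pow_increment_def)

lemma pow_multiplicity_eq_sum_pow_increment:
  assumes "prime p" "1 \<le> k" "k \<le> n"
  shows "x ^ (multiplicity p k - b)
           = (\<Sum>j\<in>{0..n}. pow_increment x j * of_bool (p ^ (if j = 0 then 0 else j + b) dvd k))"
proof -
  have "p ^ (if j = 0 then 0 else j + b) dvd k \<longleftrightarrow> j \<le> multiplicity p k - b" for j
    using power_dvd_iff_le_multiplicity[of k p "j + b"] assms prime_gt_1_nat[OF assms(1)] by auto
  moreover have "{..n} \<inter> {j. j \<le> multiplicity p k - b} = {..multiplicity p k - b}"
    using multiplicity_le_self[OF assms(1), of k] assms(3) by auto
  ultimately show ?thesis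
    by (simp add: sum_pow_increment[symmetric] sum.inter_filter[symmetric] atLeast0AtMost)
qed

lemma sum_pow_increment_div_prime_power_le:
  assumes p: "2 \<le> p" and x: "1 \<le> x" "x \<le> sqrt (real p)"
  shows "(\<Sum>j\<in>{0..n}. pow_increment x j / real (p ^ (if j = 0 then 0 else j + b)))
           \<le> 1 + 4 * (x - 1) / real p ^ (b + 1)"
proof -
  define r where "r = x / real p"
  have "4 / 3 \<le> sqrt (real p)"
    using p real_sqrt_le_mono[of "16 / 9" "real p"] by (simp add: real_sqrt_divide)
  have "r \<le> sqrt (real p) / real p"
    using x p by (simp add: r_def divide_right_mono)
  also have "\<dots> = 1 / sqrt (real p)"
    using p by (simp add: field_simps)
  also have "\<dots> \<le> 3 / 4"
    using \<open>4 / 3 \<le> sqrt (real p)\<close> p by (simp add: pos_divide_le_eq)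
  finally have "r \<le> 3 / 4" .
  moreover have "0 \<le> r" using x by (simp add: r_def)
  ultimately have geometric: "(\<Sum>i<n. r ^ i) \<le> 4"
    by (simp add: sum_gp_strict field_simps) (smt (verit) zero_le_power)
  have "(\<Sum>j\<in>{0..n}. pow_increment x j / real (p ^ (if j = 0 then 0 else j + b)))
      = 1 + (\<Sum>i<n. pow_increment x (Suc i) / real (p ^ (Suc i + b)))"
    unfolding atLeast0AtMost sum.atMost_shift by (simp add: pow_increment_def)
  also have "(\<Sum>i<n. pow_increment x (Suc i) / real (p ^ (Suc i + b)))
      = (x - 1) / real p ^ (b + 1) * (\<Sum>i<n. r ^ i)"
    by (simp add: sum_distrib_left pow_increment_def r_def power_add power_divide field_simps)
  also have "\<dots> \<le> (x - 1) / real p ^ (b + 1) * 4"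
    using x geometric by (intro mult_left_mono) auto
  finally show ?thesis by (simp add: mult.commute)
qed

text \<open>Rankin's trick: expanding each factor \<open>x\<^sup>e\<close> into nonnegative increments attached to the
  prime powers dividing \<open>k\<close> turns the sum into a count of multiples.\<close>

lemma sum_prod_pow_multiplicity_le:
  fixes x :: "nat \<Rightarrow> real" and b :: "nat \<Rightarrow> nat"
  assumes P: "finite P" "\<And>p. p \<in> P \<Longrightarrow> prime p"
    and x: "\<And>p. p \<in> P \<Longrightarrow> 1 \<le> x p" "\<And>p. p \<in> P \<Longrightarrow> x p \<le> sqrt (real p)"
  shows "(\<Sum>k=1..n. \<Prod>p\<in>P. x p ^ (multiplicity p k - b p))
           \<le> real n * (\<Prod>p\<in>P. 1 + 4 * (x p - 1) / real p ^ (b p + 1))"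
proof -
  define a where "a p j = (if j = 0 then 0 else j + b p)" for p j
  have "(\<Sum>k=1..n. \<Prod>p\<in>P. x p ^ (multiplicity p k - b p))
      = (\<Sum>k=1..n. \<Prod>p\<in>P. \<Sum>j\<in>{0..n}. pow_increment (x p) j * of_bool (p ^ a p j dvd k))"
    using P unfolding a_def by (intro sum.cong prod.cong refl pow_multiplicity_eq_sum_pow_increment) auto
  also have "\<dots> \<le> real n * (\<Prod>p\<in>P. \<Sum>j\<in>{0..n}. pow_increment (x p) j / real (p ^ a p j))"
    using P x by (intro sum_prod_prime_power_indicators_le pow_increment_nonneg) auto
  also have "\<dots> \<le> real n * (\<Prod>p\<in>P. 1 + 4 * (x p - 1) / real p ^ (b p + 1))"
    using P x unfolding a_def
    by (intro mult_left_mono prod_mono conjI sum_nonneg divide_nonneg_nonneg pow_increment_nonneg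
        sum_pow_increment_div_prime_power_le) (auto simp: prime_ge_2_nat)
  finally show ?thesis .
qed

lemma ln_eq_sum_multiplicity:
  assumes "1 \<le> k" "k \<le> N"
  shows "ln (real k) = (\<Sum>p | prime p \<and> p \<le> N. real (multiplicity p k) * ln (real p))"
proof -
  have "real k = (\<Prod>p\<in>prime_factors k. real p ^ multiplicity p k)"
    using prime_factorization_nat[of k] assms by (simp flip: of_nat_power of_nat_prod)
  also have "ln \<dots> = (\<Sum>p\<in>prime_factors k. ln (real p ^ multiplicity p k))"
    by (rule ln_prod) (auto dest: in_prime_factors_imp_prime prime_gt_0_nat)
  also have "\<dots> = (\<Sum>p\<in>prime_factors k. real (multiplicity p k) * ln (real p))"
    by (intro sum.cong refl) (auto dest!: in_prime_factors_imp_prime simp: prime_gt_0_nat ln_realpow)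
  also have "\<dots> = (\<Sum>p | prime p \<and> p \<le> N. real (multiplicity p k) * ln (real p))"
    using assms
    by (intro sum.mono_neutral_left)
       (auto simp: in_prime_factors_iff not_dvd_imp_multiplicity_0 intro: order_trans[OF dvd_imp_le])
  finally show ?thesis .
qed

lemma half_quotient_le_div:
  assumes "0 < p" "p \<le> N"
  shows "real N / (2 * real p) \<le> real (N div p)"
proof -
  have "1 \<le> N div p"
    using assms by (simp add: div_greater_zero_iff Suc_le_eq)
  have "N < p * (N div p) + p"
    using assms by (metis add_less_cancel_left div_mult_mod_eq mod_less_divisor mult.commute)
  also have "\<dots> \<le> 2 * p * (N div p)"
    using \<open>1 \<le> N div p\<close> by simp
  finally have "real N \<le> 2 * real p * real (N div p)"
    by (metis less_imp_le of_nat_le_iff of_nat_mult of_nat_numeral)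
  then show ?thesis
    using assms by (simp add: field_simps)
qed

lemma sum_ln_prime_div_prime_le:
  shows "(\<Sum>p | prime p \<and> p \<le> N. ln (real p) / real p) \<le> 2 * ln (real N)"
proof (cases "N = 0")
  case False
  let ?P = "{p. prime p \<and> p \<le> N}"
  have "(\<Sum>k=1..N. of_bool (p dvd k)) = real (N div p)" if "p \<in> ?P" for p
    using that by (intro sum_of_bool_dvd_atLeastAtMost) (simp add: prime_gt_0_nat)
  then have "(\<Sum>p\<in>?P. real (N div p) * ln (real p))
      = (\<Sum>p\<in>?P. (\<Sum>k=1..N. of_bool (p dvd k)) * ln (real p))"
    by simp
  also have "\<dots> = (\<Sum>k=1..N. \<Sum>p\<in>?P. of_bool (p dvd k) * ln (real p))"
    unfolding sum_distrib_right by (rule sum.swap)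
  also have "\<dots> \<le> (\<Sum>k=1..N. \<Sum>p\<in>?P. real (multiplicity p k) * ln (real p))"
    by (intro sum_mono mult_right_mono)
       (auto simp: of_bool_def prime_multiplicity_gt_zero_iff Suc_le_eq prime_gt_0_nat)
  also have "\<dots> = (\<Sum>k=1..N. ln (real k))"
    by (intro sum.cong refl) (auto simp: ln_eq_sum_multiplicity)
  also have "\<dots> \<le> real N * ln (real N)"
    using sum_bounded_above[of "{1..N}" "\<lambda>k. ln (real k)" "ln (real N)"] by simp
  finally have upper: "(\<Sum>p\<in>?P. real (N div p) * ln (real p)) \<le> real N * ln (real N)" .
  have "real N * ((\<Sum>p\<in>?P. ln (real p) / real p) / 2)
      = (\<Sum>p\<in>?P. real N / (2 * real p) * ln (real p))"
    by (simp add: sum_distrib_left sum_divide_distrib ac_simps)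
  also have "\<dots> \<le> (\<Sum>p\<in>?P. real (N div p) * ln (real p))"
    by (intro sum_mono mult_right_mono half_quotient_le_div) (auto simp: prime_gt_0_nat Suc_le_eq)
  also note upper
  finally show ?thesis
    using False by (simp add: mult_le_cancel_left_pos)
qed simp

lemma sum_inverse_sqrt_le: "(\<Sum>k=1..n. 1 / sqrt (real k)) \<le> 2 * sqrt (real n)"
proof (induction n)
  case (Suc n)
  have "sqrt (real n) * sqrt (real (Suc n)) = sqrt (real n * (real n + 1))"
    by (simp add: real_sqrt_mult)
  also have "\<dots> \<le> sqrt ((real n + 1 / 2) ^ 2)"
    by (intro real_sqrt_le_mono) (simp add: power2_eq_square algebra_simps)
  finally have "1 \<le> (2 * sqrt (real (Suc n)) - 2 * sqrt (real n)) * sqrt (real (Suc n))"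
    by (simp add: algebra_simps)
  then have "1 / sqrt (real (Suc n)) \<le> 2 * sqrt (real (Suc n)) - 2 * sqrt (real n)"
    by (simp add: field_simps)
  with Suc show ?case by simp
qed simp

lemma sum_inverse_sqrt_cube_le: "(\<Sum>k=1..n. 1 / (real k * sqrt (real k))) \<le> 3"
proof -
  have telescoped: "(\<Sum>k=1..n. 1 / (real k * sqrt (real k))) \<le> 3 - 2 / sqrt (real n)"
    if "1 \<le> n" for n
    using that
  proof (induction n rule: dec_induct)
    case (step n)
    let ?a = "sqrt (real n)" and ?b = "sqrt (real (Suc n))"
    have a: "1 \<le> ?a" "?a \<le> ?b" using step by auto
    have "(?b - ?a) * (?b + ?a) = 1" by (simp add: algebra_simps)
    then have "?b - ?a = 1 / (?b + ?a)"
      using a by (simp add: eq_divide_eq add_nonneg_eq_0_iff)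
    have "?a * ?b * (?b + ?a) \<le> ?b * ?b * (2 * ?b)"
      using a by (intro mult_mono) auto
    then have "2 / (?b * ?b * (2 * ?b)) \<le> 2 / (?a * ?b * (?b + ?a))"
      using a by (intro divide_left_mono) (auto intro!: mult_pos_pos add_pos_pos)
    then have "1 / (real (Suc n) * ?b) \<le> 2 / (?a * ?b * (?b + ?a))"
      by simp
    also have "\<dots> = 2 * (?b - ?a) / (?a * ?b)"
      using \<open>?b - ?a = 1 / (?b + ?a)\<close> by simp
    also have "\<dots> = 2 / ?a - 2 / ?b"
      using a by (simp add: field_simps)
    finally show ?case using step by simp
  qed simp
  show ?thesis
  proof (cases "n = 0")
    case False
    then have "(\<Sum>k=1..n. 1 / (real k * sqrt (real k))) \<le> 3 - 2 / sqrt (real n)"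
      by (intro telescoped) simp
    also have "\<dots> \<le> 3"
      by simp
    finally show ?thesis .
  qed simp
qed

lemma exp_minus_one_le:
  assumes "0 \<le> (y::real)"
  shows "exp y - 1 \<le> y * exp y"
proof -
  have "(1 - y) * exp y \<le> exp (- y) * exp y"
    using exp_ge_add_one_self[of "- y"] by (intro mult_right_mono) auto
  then show ?thesis
    by (simp add: exp_minus field_simps)
qed

lemma powr_le_sqrt:
  fixes x t :: real
  assumes "1 \<le> x" "t \<le> 1 / 2"
  shows "x powr t \<le> sqrt x"
  using powr_mono[OF assms(2,1)] assms(1) by (simp add: powr_half_sqrt)

lemma exp_add_le_mean_exp_double: "exp (u + v) \<le> (exp (2 * u) + exp (2 * v)) / 2" for u v :: real
  using sum_squares_bound[of "exp u" "exp v"]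
  by (simp add: exp_add exp_double[symmetric] field_simps)

lemma diff_power4_le:
  fixes a b :: real
  assumes "0 \<le> a" "0 \<le> b"
  shows "(a - b) ^ 4 \<le> a ^ 4 + b ^ 4"
proof -
  have "(a - b) ^ 4 = \<bar>a - b\<bar> ^ 4"
    by (simp add: power_even_abs_numeral)
  also have "\<dots> \<le> max a b ^ 4"
    using assms by (intro power_mono) auto
  also have "\<dots> \<le> a ^ 4 + b ^ 4"
    using assms by (simp add: max_def)
  finally show ?thesis .
qed

lemma power4_le_exp:
  fixes y :: real
  assumes "0 \<le> y"
  shows "y ^ 4 \<le> 256 * exp y"
proof -
  have "(y / 4) ^ 4 \<le> exp (y / 4) ^ 4"
    using assms exp_ge_add_one_self[of "y / 4"] by (intro power_mono; linarith)
  then show ?thesis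
    by (simp add: exp_of_nat_mult[symmetric] power_divide)
qed

section \<open>Fourth central moments from exponential moments\<close>

lemma central_fourth_moment_le_of_exp_moment:
  fixes V :: "'a \<Rightarrow> real"
  assumes A: "finite A" "A \<noteq> {}" and L: "0 < L"
    and bounded: "\<And>x. x \<in> A \<Longrightarrow> V x \<le> c"
    and exp_moment: "measure_pmf.expectation (pmf_of_set A) (\<lambda>x. exp ((c - V x) / L)) \<le> K"
  shows "measure_pmf.expectation (pmf_of_set A)
           (\<lambda>x. (V x - measure_pmf.expectation (pmf_of_set A) V) ^ 4) \<le> (K ^ 4 + 256 * K) * L ^ 4"
proof -
  define N where "N = real (card A)"
  have N: "0 < N"
    using A by (simp add: N_def card_gt_0_iff)
  define W where "W x = c - V x" for x
  define \<mu> where "\<mu> = (\<Sum>x\<in>A. W x) / N"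
  have W_nonneg: "0 \<le> W x" if "x \<in> A" for x
    using bounded[OF that] by (simp add: W_def)
  have exp_sum: "(\<Sum>x\<in>A. exp (W x / L)) \<le> K * N"
    using exp_moment A N by (simp add: integral_pmf_of_set W_def N_def pos_divide_le_eq)
  have "0 \<le> \<mu>"
    using W_nonneg N by (simp add: \<mu>_def sum_nonneg)
  have "(\<Sum>x\<in>A. W x) \<le> (\<Sum>x\<in>A. L * exp (W x / L))"
  proof (rule sum_mono)
    fix x
    have "W x / L \<le> exp (W x / L)"
      using exp_ge_add_one_self[of "W x / L"] by linarith
    then show "W x \<le> L * exp (W x / L)"
      using L by (simp add: pos_divide_le_eq mult.commute)
  qed
  also have "\<dots> \<le> L * (K * N)"
    using exp_sum L by (simp add: sum_distrib_left[symmetric])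
  finally have "\<mu> \<le> L * K"
    using N by (simp add: \<mu>_def pos_divide_le_eq mult.assoc)
  have "(\<Sum>x\<in>A. (\<mu> - W x) ^ 4) \<le> (\<Sum>x\<in>A. \<mu> ^ 4 + 256 * L ^ 4 * exp (W x / L))"
  proof (rule sum_mono)
    fix x assume "x \<in> A"
    have "(\<mu> - W x) ^ 4 \<le> \<mu> ^ 4 + W x ^ 4"
      using \<open>0 \<le> \<mu>\<close> W_nonneg[OF \<open>x \<in> A\<close>] by (rule diff_power4_le)
    also have "W x ^ 4 = L ^ 4 * (W x / L) ^ 4"
      using L by (simp add: power_divide)
    also have "\<dots> \<le> L ^ 4 * (256 * exp (W x / L))"
      using L W_nonneg[OF \<open>x \<in> A\<close>] by (intro mult_left_mono power4_le_exp) auto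
    finally show "(\<mu> - W x) ^ 4 \<le> \<mu> ^ 4 + 256 * L ^ 4 * exp (W x / L)"
      by simp
  qed
  also have "\<dots> = N * \<mu> ^ 4 + 256 * L ^ 4 * (\<Sum>x\<in>A. exp (W x / L))"
    by (simp add: sum.distrib sum_distrib_left N_def)
  also have "\<dots> \<le> N * (L * K) ^ 4 + 256 * L ^ 4 * (K * N)"
    using N \<open>0 \<le> \<mu>\<close> \<open>\<mu> \<le> L * K\<close> exp_sum
    by (intro add_mono mult_left_mono power_mono) auto
  finally have bound: "(\<Sum>x\<in>A. (\<mu> - W x) ^ 4) / N \<le> (K ^ 4 + 256 * K) * L ^ 4"
    using N by (simp add: pos_divide_le_eq algebra_simps power_mult_distrib)
  have mean: "measure_pmf.expectation (pmf_of_set A) V = c - \<mu>"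
    using A N by (simp add: integral_pmf_of_set \<mu>_def W_def N_def sum_subtractf field_simps)
  have "measure_pmf.expectation (pmf_of_set A) (\<lambda>x. (V x - measure_pmf.expectation (pmf_of_set A) V) ^ 4)
      = (\<Sum>x\<in>A. (\<mu> - W x) ^ 4) / N"
    unfolding mean using A by (simp add: integral_pmf_of_set N_def W_def algebra_simps)
  with bound show ?thesis
    by simp
qed

section \<open>The truncated radical \<open>Utilde\<close>\<close>

text \<open>The truncated subtraction is intended: a prime \<open>p > m\<close> not dividing \<open>k\<close> contributes \<open>0\<close>.\<close>

lemma ln_div_Utilde:
  assumes "1 \<le> k" "k \<le> n"
  shows "ln (real k) - ln (real (Utilde n m k))
           = (\<Sum>p | prime p \<and> p \<le> n. real (multiplicity p k - of_bool (m < p)) * ln (real p))"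
proof -
  have "ln (real (Utilde n m k))
      = (\<Sum>p | prime p \<and> m < p \<and> p \<le> n. ln (real p ^ (if lambda_exp p k \<ge> 1 then 1 else 0)))"
    unfolding Utilde_def of_nat_prod of_nat_power by (rule ln_prod) (auto simp: prime_gt_0_nat)
  also have "\<dots> = (\<Sum>p | prime p \<and> m < p \<and> p \<le> n. of_bool (p dvd k) * ln (real p))"
    using assms unfolding lambda_exp_def
    by (intro sum.cong refl) (auto simp: prime_multiplicity_gt_zero_iff Suc_le_eq)
  also have "\<dots> = (\<Sum>p | prime p \<and> p \<le> n. of_bool (m < p \<and> p dvd k) * ln (real p))"
    by (intro sum.mono_neutral_cong_left) auto
  finally have ln_Utilde: "ln (real (Utilde n m k))
      = (\<Sum>p | prime p \<and> p \<le> n. of_bool (m < p \<and> p dvd k) * ln (real p))" .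
  have "real (multiplicity p k - of_bool (m < p))
      = real (multiplicity p k) - of_bool (m < p \<and> p dvd k)" if "prime p" for p
    using that assms
    by (auto simp: prime_multiplicity_gt_zero_iff Suc_le_eq not_dvd_imp_multiplicity_0)
  with ln_Utilde show ?thesis
    by (simp add: ln_eq_sum_multiplicity[OF assms] sum_subtractf[symmetric] left_diff_distrib
        del: sum_of_bool_mult_eq)
qed

lemma ln_Utilde_le_ln:
  assumes "k \<in> {1..n}"
  shows "ln (real (Utilde n m k)) \<le> ln (real n)"
proof -
  have "0 \<le> ln (real k) - ln (real (Utilde n m k))"
    using assms by (auto simp: ln_div_Utilde intro!: sum_nonneg mult_nonneg_nonneg dest: prime_ge_1_nat)
  moreover have "ln (real k) \<le> ln (real n)"
    using assms by simp
  ultimately show ?thesis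
    by linarith
qed

lemma sum_powr_minus_one_div_prime_power_le:
  assumes L: "4 \<le> ln (real m)"
  shows "(\<Sum>p | prime p \<and> p \<le> n.
            4 * (real p powr (2 / ln (real m)) - 1) / real p ^ (of_bool (m < p) + 1))
           \<le> 16 * exp 2 + 12"
proof -
  define t where "t = 2 / ln (real m)"
  have t: "0 < t" "t \<le> 1 / 2" "t * ln (real m) = 2"
    using L by (auto simp: t_def field_simps)
  define small where "small p = 4 * exp 2 * t * (ln (real p) / real p)" for p :: nat
  have small_nonneg: "0 \<le> small p" if "prime p" for p
    using that t prime_ge_1_nat[of p] unfolding small_def
    by (intro mult_nonneg_nonneg divide_nonneg_nonneg) auto
  have summand_le: "4 * (real p powr t - 1) / real p ^ (of_bool (m < p) + 1)
      \<le> of_bool (p \<le> m) * small p + 4 / (real p * sqrt (real p))" if p: "prime p" for p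
  proof (cases "p \<le> m")
    case True
    define u where "u = t * ln (real p)"
    have "ln (real p) \<le> ln (real m)"
      using True prime_gt_0_nat[OF p] by (subst ln_le_cancel_iff) auto
    then have "u \<le> 2"
      unfolding u_def using t by (metis mult_left_mono less_imp_le)
    have "0 \<le> u"
      unfolding u_def using t p prime_ge_1_nat[of p] by simp
    have "real p powr t - 1 = exp u - 1"
      using p by (simp add: u_def powr_def prime_gt_0_nat ac_simps)
    also have "\<dots> \<le> u * exp u"
      using \<open>0 \<le> u\<close> by (rule exp_minus_one_le)
    also have "\<dots> \<le> u * exp 2"
      using \<open>0 \<le> u\<close> \<open>u \<le> 2\<close> by (intro mult_left_mono) auto
    finally have "real p powr t - 1 \<le> u * exp 2" .
    then have "4 * (real p powr t - 1) / real p \<le> 4 * (u * exp 2) / real p"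
      by (intro divide_right_mono) auto
    also have "\<dots> = small p"
      by (simp add: small_def u_def)
    finally show ?thesis
      using True by (simp add: add_increasing2)
  next
    case False
    have "4 * (real p powr t - 1) \<le> 4 * sqrt (real p)"
      using powr_le_sqrt[of "real p" t] prime_ge_1_nat[OF p] t by simp
    then have "4 * (real p powr t - 1) / real p ^ 2 \<le> 4 * sqrt (real p) / real p ^ 2"
      by (intro divide_right_mono) auto
    also have "\<dots> = 4 / (real p * sqrt (real p))"
      using p by (simp add: power2_eq_square field_simps prime_gt_0_nat)
    finally show ?thesis
      using False by (simp add: power2_eq_square)
  qed
  have "(\<Sum>p | prime p \<and> p \<le> n. of_bool (p \<le> m) * small p)
      = (\<Sum>p \<in> {p. prime p \<and> p \<le> n} \<inter> {p. p \<le> m}. small p)"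
    by simp
  also have "\<dots> \<le> (\<Sum>p | prime p \<and> p \<le> m. small p)"
    using small_nonneg by (intro sum_mono2) auto
  also have "\<dots> = 4 * exp 2 * t * (\<Sum>p | prime p \<and> p \<le> m. ln (real p) / real p)"
    by (simp add: small_def sum_distrib_left)
  also have "\<dots> \<le> 4 * exp 2 * t * (2 * ln (real m))"
    using t by (intro mult_left_mono sum_ln_prime_div_prime_le) auto
  also have "\<dots> = 16 * exp 2"
    using t(3) by simp
  finally have small_primes: "(\<Sum>p | prime p \<and> p \<le> n. of_bool (p \<le> m) * small p) \<le> 16 * exp 2" .
  have "(\<Sum>p | prime p \<and> p \<le> n. 4 / (real p * sqrt (real p)))
      \<le> (\<Sum>k=1..n. 4 / (real k * sqrt (real k)))"
    by (intro sum_mono2) (auto simp: prime_gt_0_nat Suc_le_eq)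
  also have "\<dots> = 4 * (\<Sum>k=1..n. 1 / (real k * sqrt (real k)))"
    by (simp add: sum_distrib_left)
  also have "\<dots> \<le> 12"
    using sum_inverse_sqrt_cube_le[of n] by simp
  finally have large_primes: "(\<Sum>p | prime p \<and> p \<le> n. 4 / (real p * sqrt (real p))) \<le> 12" .
  have "(\<Sum>p | prime p \<and> p \<le> n. 4 * (real p powr t - 1) / real p ^ (of_bool (m < p) + 1))
      \<le> (\<Sum>p | prime p \<and> p \<le> n. of_bool (p \<le> m) * small p + 4 / (real p * sqrt (real p)))"
    by (intro sum_mono summand_le) simp
  also have "\<dots> \<le> 16 * exp 2 + 12"
    using small_primes large_primes by (simp only: sum.distrib)
  finally show ?thesis
    by (simp add: t_def)
qed

lemma sum_exp_ln_div_Utilde_le: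
  assumes L: "4 \<le> ln (real m)"
  shows "(\<Sum>k=1..n. exp (2 / ln (real m) * (ln (real k) - ln (real (Utilde n m k)))))
           \<le> real n * exp (16 * exp 2 + 12)"
proof -
  define t where "t = 2 / ln (real m)"
  have t: "0 < t" "t \<le> 1 / 2"
    using L by (auto simp: t_def field_simps)
  define P where "P = {p. prime p \<and> p \<le> n}"
  have "finite P"
    by (simp add: P_def)
  define x where "x p = real p powr t" for p :: nat
  have x: "1 \<le> x p" "x p \<le> sqrt (real p)" if "prime p" for p
    using prime_ge_1_nat[OF that] t by (auto simp: x_def ge_one_powr_ge_zero powr_le_sqrt)
  have "exp (t * (ln (real k) - ln (real (Utilde n m k))))
      = (\<Prod>p\<in>P. x p ^ (multiplicity p k - of_bool (m < p)))" if "k \<in> {1..n}" for k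
  proof -
    have "exp (t * (ln (real k) - ln (real (Utilde n m k))))
        = exp (\<Sum>p\<in>P. real (multiplicity p k - of_bool (m < p)) * (t * ln (real p)))"
      using that by (simp add: ln_div_Utilde P_def sum_distrib_left ac_simps)
    also have "\<dots> = (\<Prod>p\<in>P. exp (t * ln (real p)) ^ (multiplicity p k - of_bool (m < p)))"
      by (simp only: exp_sum[OF \<open>finite P\<close>] exp_of_nat_mult)
    also have "\<dots> = (\<Prod>p\<in>P. x p ^ (multiplicity p k - of_bool (m < p)))"
      by (intro prod.cong refl) (simp add: P_def x_def powr_def prime_gt_0_nat)
    finally show ?thesis .
  qed
  then have "(\<Sum>k=1..n. exp (t * (ln (real k) - ln (real (Utilde n m k)))))
      = (\<Sum>k=1..n. \<Prod>p\<in>P. x p ^ (multiplicity p k - of_bool (m < p)))"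
    by (intro sum.cong) auto
  also have "\<dots> \<le> real n * (\<Prod>p\<in>P. 1 + 4 * (x p - 1) / real p ^ (of_bool (m < p) + 1))"
    using x by (intro sum_prod_pow_multiplicity_le) (auto simp: P_def)
  also have "\<dots> \<le> real n * (\<Prod>p\<in>P. exp (4 * (x p - 1) / real p ^ (of_bool (m < p) + 1)))"
    using x by (intro mult_left_mono prod_mono conjI add_nonneg_nonneg exp_ge_add_one_self)
      (auto simp: P_def)
  also have "\<dots> = real n * exp (\<Sum>p\<in>P. 4 * (x p - 1) / real p ^ (of_bool (m < p) + 1))"
    by (simp add: exp_sum[OF \<open>finite P\<close>])
  also have "\<dots> \<le> real n * exp (16 * exp 2 + 12)"
    using sum_powr_minus_one_div_prime_power_le[OF L, of n] unfolding P_def x_def t_def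
    by (intro mult_left_mono) auto
  finally show ?thesis
    by (simp add: t_def)
qed

lemma sum_exp_ln_ratio_le:
  assumes "0 \<le> t" "t \<le> 1 / 2"
  shows "(\<Sum>k=1..n. exp (t * (ln (real n) - ln (real k)))) \<le> 2 * real n"
proof -
  have "exp (t * (ln (real n) - ln (real k))) \<le> sqrt (real n) * (1 / sqrt (real k))"
    if k: "k \<in> {1..n}" for k
  proof -
    have "0 \<le> ln (real n) - ln (real k)"
      using k by auto
    then have "t * (ln (real n) - ln (real k)) \<le> (ln (real n) - ln (real k)) / 2"
      using mult_right_mono[OF assms(2)] by simp
    then have "exp (t * (ln (real n) - ln (real k))) \<le> exp ((ln (real n) - ln (real k)) / 2)"
      by simp
    also have "\<dots> = real n powr (1 / 2) / real k powr (1 / 2)"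
      using k by (simp add: powr_def exp_diff diff_divide_distrib)
    finally show ?thesis
      by (simp add: powr_half_sqrt)
  qed
  then have "(\<Sum>k=1..n. exp (t * (ln (real n) - ln (real k))))
      \<le> (\<Sum>k=1..n. sqrt (real n) * (1 / sqrt (real k)))"
    by (rule sum_mono)
  also have "\<dots> = sqrt (real n) * (\<Sum>k=1..n. 1 / sqrt (real k))"
    by (simp add: sum_distrib_left)
  also have "\<dots> \<le> sqrt (real n) * (2 * sqrt (real n))"
    by (intro mult_left_mono sum_inverse_sqrt_le) auto
  also have "\<dots> = 2 * real n"
    by simp
  finally show ?thesis .
qed

lemma exp_moment_ln_Utilde_le:
  assumes L: "4 \<le> ln (real m)" and n: "1 \<le> n"
  shows "measure_pmf.expectation (U_law n) (\<lambda>k. exp ((ln (real n) - ln (real (Utilde n m k))) / ln (real m)))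
           \<le> 1 + exp (16 * exp 2 + 12) / 2"
proof -
  let ?t = "2 / ln (real m)"
  have "exp ((ln (real n) - ln (real (Utilde n m k))) / ln (real m))
      \<le> (exp (?t * (ln (real n) - ln (real k))) + exp (?t * (ln (real k) - ln (real (Utilde n m k))))) / 2"
    for k
    using exp_add_le_mean_exp_double[of "(ln (real n) - ln (real k)) / ln (real m)"
        "(ln (real k) - ln (real (Utilde n m k))) / ln (real m)"]
    by (simp add: add_divide_distrib[symmetric])
  then have "(\<Sum>k=1..n. exp ((ln (real n) - ln (real (Utilde n m k))) / ln (real m)))
      \<le> ((\<Sum>k=1..n. exp (?t * (ln (real n) - ln (real k))))
         + (\<Sum>k=1..n. exp (?t * (ln (real k) - ln (real (Utilde n m k)))))) / 2"
    by (simp add: sum_mono sum.distrib[symmetric] sum_divide_distrib)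
  also have "\<dots> \<le> (2 * real n + real n * exp (16 * exp 2 + 12)) / 2"
    using L by (intro divide_right_mono add_mono sum_exp_ln_ratio_le sum_exp_ln_div_Utilde_le)
      (auto simp: field_simps)
  finally show ?thesis
    using n by (simp add: U_law_def integral_pmf_of_set field_simps)
qed

theorem lemma5p6:
  fixes m :: "nat \<Rightarrow> nat"
  assumes "filterlim m at_top sequentially"
    and "(\<lambda>n. real (m n)) \<in> o(\<lambda>n. real n)"
  shows "(\<lambda>n. measure_pmf.expectation (U_law n)
            (\<lambda>k. (ln (real (Utilde n (m n) k))
                  - measure_pmf.expectation (U_law n) (\<lambda>j. ln (real (Utilde n (m n) j)))) ^ 4))
         \<in> O(\<lambda>n. (ln (real (m n))) ^ 4)"
proof -
  \<comment> \<open>The bound is uniform in \<open>m\<close> and \<open>n\<close>.\<close>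
  define K :: real where "K = 1 + exp (16 * exp 2 + 12) / 2"
  have "filterlim (\<lambda>n. ln (real (m n))) at_top sequentially"
    by (rule filterlim_compose[OF ln_at_top filterlim_compose[OF filterlim_real_sequentially assms(1)]])
  then have "eventually (\<lambda>n. 4 \<le> ln (real (m n)) \<and> 1 \<le> n) sequentially"
    by (simp add: filterlim_at_top eventually_conj eventually_ge_at_top)
  then have "eventually (\<lambda>n. norm (measure_pmf.expectation (U_law n)
            (\<lambda>k. (ln (real (Utilde n (m n) k))
                  - measure_pmf.expectation (U_law n) (\<lambda>j. ln (real (Utilde n (m n) j)))) ^ 4))
         \<le> (K ^ 4 + 256 * K) * norm (ln (real (m n)) ^ 4)) sequentially"
  proof eventually_elim
    case (elim n)
    then have "measure_pmf.expectation (U_law n)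
            (\<lambda>k. (ln (real (Utilde n (m n) k))
                  - measure_pmf.expectation (U_law n) (\<lambda>j. ln (real (Utilde n (m n) j)))) ^ 4)
         \<le> (K ^ 4 + 256 * K) * ln (real (m n)) ^ 4"
      using exp_moment_ln_Utilde_le[of "m n" n] ln_Utilde_le_ln[of _ n "m n"] unfolding K_def U_law_def
      by (intro central_fourth_moment_le_of_exp_moment) auto
    then show ?case
      by simp
  qed
  then show ?thesis
    by (rule bigoI)
qed

end
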